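(* Let $l\ge2$ and $1\le i\le l-1$ be integers, and let $\beta_1,\dots,\beta_i,\eta$ be real numbers in $(0,1)$ with $\eta=1-(\beta_1+\cdots+\beta_i)$; write $\overline{\boldsymbol\beta}=(\beta_1,\dots,\beta_i,\eta)$. Then there exist constants $C,N$ depending only on $\overline{\boldsymbol\beta}$ such that for all integers $n\ge N$ and all integers $d>1$, $$\frac{1}{d^{l-1}}\sum_{1\le h_1,\dots,h_i\le d-1}\Big|\beta_1 e\big(\tfrac{h_1}{d}\big)+\cdots+\beta_i e\big(\tfrac{h_i}{d}\big)+\eta\Big|^n\le C\,\frac{\log n}{\sqrt n},$$ where $e(x)=e^{2\pi i x}$. *)

theory Defs
  imports Complex_Main "HOL-Library.FuncSet"
begin

definition e :: "real \<Rightarrow> complex" where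
  "e x = exp (2 * of_real pi * \<i> * of_real x)"

end

theory Submission
  imports Defs
begin

(* Isolating the first weight, |b e(x) + t| <= b + t - 2 b t sin(pi x)^2 for b + t <= 1, so by the
   triangle inequality every summand is at most (1 - c sin(pi h_1/d)^2)^n with c = 2 beta_1 eta.
   The sum over h therefore reduces to (d - 1)^(i - 1) copies of a sum over j = 1..d-1. Put
   eps = sqrt(ln n / (c n)): the terms with sin(pi j/d) > eps are at most (1 - c eps^2)^n <= 1/n,
   and since sin(pi y) >= y/2 on [0, 1/2], at most 4 eps d indices j have sin(pi j/d) <= eps.
   Hence the normalised sum is at most 4 eps + 1/n, which is O(ln n / sqrt n). *)

lemma e_eq_cis: "e x = cis (2 * pi * x)"
  unfolding e_def cis_conv_exp by (simp add: mult_ac)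

lemma norm_cis_add_le:
  fixes b t x :: real
  assumes "0 \<le> b" "0 \<le> t" "b + t \<le> 1"
  shows "cmod (of_real b * cis x + of_real t) \<le> b + t - 2 * b * t * sin (x / 2) ^ 2"
proof -
  define s where "s = sin (x / 2) ^ 2"
  have s: "0 \<le> s" "s \<le> 1"
    unfolding s_def by (auto simp: abs_square_le_1)
  have cos_x: "cos x = 1 - 2 * s"
    using cos_double_sin[of "x / 2"] by (simp add: s_def)
  have "cmod (of_real b * cis x + of_real t) ^ 2 = (b * cos x + t) ^ 2 + (b * sin x) ^ 2"
    by (simp add: cmod_power2)
  also have "\<dots> = b ^ 2 + t ^ 2 + 2 * b * t * cos x"
    using sin_cos_squared_add[of x] by algebra
  also have "\<dots> = (b + t) ^ 2 - 4 * b * t * s"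
    by (simp add: cos_x s_def power2_eq_square algebra_simps)
  also have "\<dots> \<le> (b + t - 2 * b * t * s) ^ 2"
  proof -
    have "(b + t) * (b * t * s) \<le> b * t * s"
      using assms s by (simp add: mult_left_le_one_le)
    moreover have "0 \<le> (b * t * s) ^ 2"
      by simp
    ultimately show ?thesis
      by (simp add: power2_eq_square algebra_simps)
  qed
  finally have "cmod (of_real b * cis x + of_real t) ^ 2 \<le> (b + t - 2 * b * t * s) ^ 2" .
  moreover have "0 \<le> b + t - 2 * b * t * s"
  proof -
    have "b * t * s \<le> b * t" "b * t \<le> b" "b * t \<le> t"
      using assms s by (auto simp: mult_left_le mult_left_le_one_le)
    then show ?thesis by linarith
  qed
  ultimately show ?thesis
    unfolding s_def by (rule power2_le_imp_le)
qed

lemma norm_weighted_e_sum_le: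
  fixes \<beta> \<theta> :: "'a \<Rightarrow> real"
  assumes "finite K" "k \<in> K" "\<forall>j\<in>K. 0 \<le> \<beta> j" "0 \<le> \<eta>"
    and "(\<Sum>j\<in>K. \<beta> j) + \<eta> = 1"
  shows "cmod ((\<Sum>j\<in>K. of_real (\<beta> j) * e (\<theta> j)) + of_real \<eta>)
           \<le> 1 - 2 * \<beta> k * \<eta> * sin (pi * \<theta> k) ^ 2"
proof -
  define R where "R = K - {k}"
  have sum_e: "(\<Sum>j\<in>K. of_real (\<beta> j) * e (\<theta> j))
      = of_real (\<beta> k) * e (\<theta> k) + (\<Sum>j\<in>R. of_real (\<beta> j) * e (\<theta> j))"
    and sum_\<beta>: "(\<Sum>j\<in>K. \<beta> j) = \<beta> k + (\<Sum>j\<in>R. \<beta> j)"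
    unfolding R_def using assms(1,2) by (simp_all add: sum.remove)
  have "0 \<le> (\<Sum>j\<in>R. \<beta> j)"
    unfolding R_def using assms(3) by (intro sum_nonneg) auto
  then have "cmod (of_real (\<beta> k) * e (\<theta> k) + of_real \<eta>)
      \<le> \<beta> k + \<eta> - 2 * \<beta> k * \<eta> * sin (pi * \<theta> k) ^ 2"
    using norm_cis_add_le[of "\<beta> k" \<eta> "2 * pi * \<theta> k"] assms sum_\<beta> by (simp add: e_eq_cis)
  moreover have "cmod (\<Sum>j\<in>R. of_real (\<beta> j) * e (\<theta> j)) \<le> (\<Sum>j\<in>R. \<beta> j)"
    using assms(3) by (intro sum_norm_le) (simp add: R_def norm_mult e_eq_cis)
  moreover have "cmod ((\<Sum>j\<in>K. of_real (\<beta> j) * e (\<theta> j)) + of_real \<eta>)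
      \<le> cmod (of_real (\<beta> k) * e (\<theta> k) + of_real \<eta>)
         + cmod (\<Sum>j\<in>R. of_real (\<beta> j) * e (\<theta> j))"
    unfolding sum_e by (rule order.trans[OF eq_refl norm_triangle_ineq]) (simp add: ac_simps)
  ultimately show ?thesis
    using assms(5) sum_\<beta> by linarith
qed

lemma sum_PiE_coordinate:
  fixes f :: "'b \<Rightarrow> 'c :: comm_semiring_1"
  assumes "finite I" "k \<in> I" "\<And>j. j \<in> I \<Longrightarrow> finite (A j)"
  shows "(\<Sum>h\<in>PiE I A. f (h k)) = (\<Prod>j\<in>I - {k}. of_nat (card (A j))) * (\<Sum>x\<in>A k. f x)"
proof -
  define F where "F j x = (if j = k then f x else 1)" for j x
  have "(\<Sum>h\<in>PiE I A. f (h k)) = (\<Sum>h\<in>PiE I A. \<Prod>j\<in>I. F j (h j))"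
    using assms(1,2) by (intro sum.cong) (simp_all add: F_def prod.remove)
  also have "\<dots> = (\<Prod>j\<in>I. \<Sum>x\<in>A j. F j x)"
    using assms(1,3) by (rule prod_sum_PiE[symmetric])
  also have "\<dots> = (\<Sum>x\<in>A k. f x) * (\<Prod>j\<in>I - {k}. of_nat (card (A j)))"
    using assms(1,2) by (simp add: F_def prod.remove)
  finally show ?thesis
    by (simp add: mult.commute)
qed

lemma card_pos_nat_le:
  fixes x :: real
  assumes "0 \<le> x"
  shows "finite {j::nat. 0 < j \<and> real j \<le> x}"
    and "real (card {j::nat. 0 < j \<and> real j \<le> x}) \<le> x"
proof -
  have eq: "{j::nat. 0 < j \<and> real j \<le> x} = {1..nat \<lfloor>x\<rfloor>}"
    using assms by (auto simp: le_nat_iff le_floor_iff)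
  show "finite {j::nat. 0 < j \<and> real j \<le> x}"
    unfolding eq by simp
  show "real (card {j::nat. 0 < j \<and> real j \<le> x}) \<le> x"
    using assms unfolding eq by simp
qed

lemma sin_pi_ge:
  fixes y :: real
  assumes "0 \<le> y" "y \<le> 1 / 2"
  shows "y / 2 \<le> sin (pi * y)"
proof -
  define x where "x = pi * y"
  have x: "0 \<le> x" "x \<le> 2"
    unfolding x_def using assms pi_less_4 mult_mono[of pi 4 y "1 / 2"] by simp_all
  have "(\<Sum>m<3. sin_coeff m * x ^ m) = x"
    by (simp add: numeral_3_eq_3 sin_coeff_def lessThan_Suc)
  then have "\<bar>sin x - x\<bar> \<le> inverse (fact 3) * \<bar>x\<bar> ^ 3"
    using Maclaurin_sin_bound[of x 3] by simp
  then have "x - x ^ 3 / 6 \<le> sin x"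
    using x by (simp add: fact_numeral abs_if split: if_splits)
  moreover have "x ^ 3 \<le> 4 * x"
  proof -
    have "x * x ^ 2 \<le> x * 2 ^ 2"
      using x by (intro mult_left_mono power_mono) auto
    then show ?thesis
      by (simp add: power3_eq_cube power2_eq_square mult_ac)
  qed
  moreover have "2 * y \<le> x"
    unfolding x_def using assms pi_ge_two by (simp add: mult_right_mono)
  ultimately have "y / 2 \<le> sin x"
    using assms by linarith
  then show ?thesis
    unfolding x_def .
qed

lemma sin_pi_frac_ge:
  fixes j d :: nat
  assumes "j \<le> d"
  shows "real (min j (d - j)) / (2 * d) \<le> sin (pi * j / d)"
proof (cases "2 * j \<le> d")
  case True
  then have "j / d \<le> 1 / 2"
    by (cases "d = 0") (auto simp: field_simps)
  moreover have "min j (d - j) = j"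
    using True by simp
  ultimately show ?thesis
    using sin_pi_ge[of "j / d"] by (simp add: mult.commute)
next
  case False
  then have "d > 0" "real (d - j) = d - real j"
    using assms by auto
  then have "sin (pi * j / d) = sin (pi * (d - j) / d)"
    by (simp add: diff_divide_distrib right_diff_distrib)
  then show ?thesis
    using False sin_pi_ge[of "(d - j) / d"] \<open>d > 0\<close> by (simp add: field_simps)
qed

lemma card_sin_pi_frac_le:
  fixes d :: nat and \<epsilon> :: real
  assumes "0 \<le> \<epsilon>"
  shows "real (card {j\<in>{1..d-1}. sin (pi * j / d) \<le> \<epsilon>}) \<le> 4 * \<epsilon> * d"
proof -
  define A where "A = {j::nat. 0 < j \<and> real j \<le> 2 * \<epsilon> * d}"
  have fin_A: "finite A"
    unfolding A_def using assms by (simp add: card_pos_nat_le(1))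
  have "{j\<in>{1..d-1}. sin (pi * j / d) \<le> \<epsilon>} \<subseteq> A \<union> (\<lambda>j. d - j) ` A"
  proof
    fix j assume j: "j \<in> {j\<in>{1..d-1}. sin (pi * j / d) \<le> \<epsilon>}"
    then have "j \<le> d" "d > 0"
      by auto
    then have "real (min j (d - j)) / (2 * d) \<le> \<epsilon>"
      using j order_trans[OF sin_pi_frac_ge] by auto
    then have "real (min j (d - j)) \<le> 2 * \<epsilon> * d"
      using \<open>d > 0\<close> by (simp add: field_simps)
    then have "j \<in> A \<or> d - j \<in> A"
      using j unfolding A_def by (cases "j \<le> d - j") auto
    moreover have "j = d - (d - j)"
      using j by auto
    ultimately show "j \<in> A \<union> (\<lambda>j. d - j) ` A"
      by blast
  qed
  then have "card {j\<in>{1..d-1}. sin (pi * j / d) \<le> \<epsilon>} \<le> card (A \<union> (\<lambda>j. d - j) ` A)"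
    using fin_A by (intro card_mono) auto
  also have "\<dots> \<le> card A + card A"
    using card_Un_le[of A "(\<lambda>j. d - j) ` A"] card_image_le[OF fin_A, of "\<lambda>j. d - j"] by linarith
  finally show ?thesis
    using card_pos_nat_le(2)[of "2 * \<epsilon> * d"] assms unfolding A_def by simp
qed

lemma one_minus_power_le_exp:
  fixes x :: real
  assumes "x \<le> 1"
  shows "(1 - x) ^ n \<le> exp (- (n * x))"
proof -
  have "(1 - x) ^ n \<le> exp (- x) ^ n"
    using assms exp_ge_add_one_self[of "- x"] by (intro power_mono) auto
  then show ?thesis
    by (simp add: exp_of_nat_mult[symmetric])
qed

lemma sum_one_minus_sin_sq_power_le:
  fixes c :: real and n d :: nat
  assumes "0 < c" "c \<le> 1" "0 < n"
  shows "(\<Sum>j=1..d-1. (1 - c * sin (pi * j / d) ^ 2) ^ n)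
           \<le> 4 * sqrt (ln n / (c * n)) * d + d / n"
proof -
  define \<epsilon> where "\<epsilon> = sqrt (ln n / (c * n))"
  have "0 \<le> ln n"
    using assms(3) by simp
  then have \<epsilon>: "0 \<le> \<epsilon>" "exp (- (n * (c * \<epsilon> ^ 2))) = 1 / n"
    unfolding \<epsilon>_def using assms by (simp_all add: exp_minus inverse_eq_divide)
  have summand_le:
    "(1 - c * sin (pi * j / d) ^ 2) ^ n \<le> of_bool (sin (pi * j / d) \<le> \<epsilon>) + 1 / n"
    for j :: nat
  proof -
    define s where "s = sin (pi * j / d)"
    have "c * s ^ 2 \<le> 1" "0 \<le> c * s ^ 2"
      unfolding s_def using assms by (simp_all add: abs_square_le_1 mult_le_one)
    show ?thesis
    proof (cases "s \<le> \<epsilon>")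
      case True
      have "(1 - c * s ^ 2) ^ n \<le> 1"
        using \<open>c * s ^ 2 \<le> 1\<close> \<open>0 \<le> c * s ^ 2\<close> by (intro power_le_one) auto
      then show ?thesis
        using True unfolding s_def by (simp add: add_increasing2)
    next
      case False
      then have "\<epsilon> ^ 2 \<le> s ^ 2"
        using \<epsilon>(1) by (intro power_mono) auto
      have "(1 - c * s ^ 2) ^ n \<le> exp (- (n * (c * s ^ 2)))"
        using \<open>c * s ^ 2 \<le> 1\<close> by (rule one_minus_power_le_exp)
      also have "\<dots> \<le> exp (- (n * (c * \<epsilon> ^ 2)))"
        using \<open>\<epsilon> ^ 2 \<le> s ^ 2\<close> assms by (simp add: mult_left_mono)
      finally show ?thesis
        using False \<epsilon>(2) unfolding s_def by simp
    qed
  qed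
  have "(\<Sum>j=1..d-1. (1 - c * sin (pi * j / d) ^ 2) ^ n)
      \<le> (\<Sum>j=1..d-1. of_bool (sin (pi * j / d) \<le> \<epsilon>) + 1 / n)"
    by (intro sum_mono summand_le)
  also have "\<dots> = card {j\<in>{1..d-1}. sin (pi * j / d) \<le> \<epsilon>} + (d - 1) / n"
    by (simp add: sum.distrib Int_def Collect_conj_eq[symmetric])
  also have "\<dots> \<le> 4 * \<epsilon> * d + d / n"
    using card_sin_pi_frac_le[OF \<epsilon>(1), of d] divide_right_mono[of "real (d - 1)" d n] by simp
  finally show ?thesis
    unfolding \<epsilon>_def .
qed

lemma sum_norm_weighted_e_power_le:
  fixes \<beta> :: "nat \<Rightarrow> real" and \<eta> :: real and i n d :: nat
  assumes "1 \<le> i" "0 < \<beta> 1" "\<forall>k\<in>{1..i}. 0 \<le> \<beta> k" "0 < \<eta>"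
    and "(\<Sum>k=1..i. \<beta> k) + \<eta> = 1" "0 < n"
  shows "(\<Sum>h\<in>PiE {1..i} (\<lambda>_. {1..d-1}).
            cmod ((\<Sum>k=1..i. of_real (\<beta> k) * e (real (h k) / real d)) + of_real \<eta>) ^ n)
           \<le> real d ^ i * (4 * sqrt (ln n / (2 * \<beta> 1 * \<eta> * n)) + 1 / n)"
proof -
  define c where "c = 2 * \<beta> 1 * \<eta>"
  define g where "g j = (1 - c * sin (pi * j / d) ^ 2) ^ n" for j :: nat
  have "\<beta> 1 \<le> (\<Sum>k=1..i. \<beta> k)"
    using assms(1,3) by (intro member_le_sum) auto
  then have "c \<le> 2 * (1 - \<eta>) * \<eta>"
    unfolding c_def using assms(4,5) by (intro mult_right_mono) auto
  also have "\<dots> \<le> 1"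
    using sum_squares_ge_zero[of "2 * \<eta> - 1" 0] by (simp add: power2_eq_square algebra_simps)
  finally have c: "0 < c" "c \<le> 1"
    unfolding c_def using assms(2,4) by auto
  have "cmod ((\<Sum>k=1..i. of_real (\<beta> k) * e (real (h k) / real d)) + of_real \<eta>) ^ n \<le> g (h 1)"
    for h :: "nat \<Rightarrow> nat"
    using norm_weighted_e_sum_le[of "{1..i}" 1 \<beta> \<eta> "\<lambda>k. real (h k) / real d"] assms
    unfolding g_def c_def by (intro power_mono) (auto simp: mult_ac)
  then have "(\<Sum>h\<in>PiE {1..i} (\<lambda>_. {1..d-1}).
        cmod ((\<Sum>k=1..i. of_real (\<beta> k) * e (real (h k) / real d)) + of_real \<eta>) ^ n)
      \<le> (\<Sum>h\<in>PiE {1..i} (\<lambda>_. {1..d-1}). g (h 1))"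
    by (intro sum_mono)
  also have "\<dots> = real (d - 1) ^ (i - 1) * (\<Sum>j=1..d-1. g j)"
    using sum_PiE_coordinate[of "{1..i}" 1 "\<lambda>_. {1..d-1}" g] assms(1) by simp
  also have "\<dots> \<le> real (d - 1) ^ (i - 1) * (4 * sqrt (ln n / (c * n)) * d + d / n)"
    unfolding g_def using sum_one_minus_sin_sq_power_le[OF c assms(6)] by (intro mult_left_mono) auto
  also have "\<dots> = real (d - 1) ^ (i - 1) * d * (4 * sqrt (ln n / (c * n)) + 1 / n)"
    by (simp add: algebra_simps)
  also have "\<dots> \<le> real d ^ (i - 1) * d * (4 * sqrt (ln n / (c * n)) + 1 / n)"
    using c(1) assms(6) by (intro mult_right_mono power_mono add_nonneg_nonneg) auto
  also have "\<dots> = real d ^ i * (4 * sqrt (ln n / (c * n)) + 1 / n)"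
    using assms(1) by (simp add: power_eq_if)
  finally show ?thesis
    unfolding c_def by (simp add: mult_ac)
qed

lemma sqrt_ln_div_add_inverse_le:
  fixes c :: real and n :: nat
  assumes "0 < c" "3 \<le> n"
  shows "4 * sqrt (ln n / (c * n)) + 1 / n \<le> (4 / sqrt c + 1) * ln n / sqrt n"
proof -
  have "exp 1 \<le> real n"
    using exp_le assms(2) by linarith
  then have ln_n: "1 \<le> ln n"
    using assms(2) by (simp add: ln_ge_iff)
  then have "sqrt (ln n) \<le> ln n"
    by (intro real_le_lsqrt self_le_power) auto
  then have "sqrt (ln n / (c * n)) \<le> ln n / (sqrt c * sqrt n)"
    using assms by (simp add: real_sqrt_divide real_sqrt_mult divide_right_mono)
  moreover have "1 / n \<le> ln n / sqrt n"
  proof -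
    have "sqrt n \<le> n"
      using assms(2) by (intro real_le_lsqrt self_le_power) auto
    then have "1 / n \<le> 1 / sqrt n"
      using assms(2) by (simp add: divide_left_mono)
    also have "\<dots> \<le> ln n / sqrt n"
      using ln_n by (simp add: divide_right_mono)
    finally show ?thesis .
  qed
  moreover have "(4 / sqrt c + 1) * ln n / sqrt n = 4 * (ln n / (sqrt c * sqrt n)) + ln n / sqrt n"
    using assms by (simp add: field_simps)
  ultimately show ?thesis
    by linarith
qed

theorem lemma2p3:
  fixes i :: nat and \<beta> :: "nat \<Rightarrow> real" and \<eta> :: real
  assumes "i \<ge> 1"
    and "\<forall>k\<in>{1..i}. 0 < \<beta> k \<and> \<beta> k < 1"
    and "\<eta> = 1 - (\<Sum>k=1..i. \<beta> k)"
    and "0 < \<eta>" and "\<eta> < 1"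
  shows "\<exists>C N. \<forall>l n d :: nat. 2 \<le> l \<and> i \<le> l - 1 \<and> N \<le> n \<and> 1 < d \<longrightarrow>
           (1 / real d ^ (l - 1)) *
             (\<Sum>h\<in>PiE {1..i} (\<lambda>_. {1..d-1}).
                cmod ((\<Sum>k=1..i. of_real (\<beta> k) * e (real (h k) / real d)) + of_real \<eta>) ^ n)
           \<le> C * ln (real n) / sqrt (real n)"
proof -
  define c where "c = 2 * \<beta> 1 * \<eta>"
  have \<beta>: "0 < \<beta> 1" "\<forall>k\<in>{1..i}. 0 \<le> \<beta> k"
    using assms(1,2) by auto
  have weights: "(\<Sum>k=1..i. \<beta> k) + \<eta> = 1"
    using assms(3) by simp
  have "0 < c"
    unfolding c_def using \<beta>(1) assms(4) by simp
  show ?thesis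
  proof (intro exI[of _ "4 / sqrt c + 1"] exI[of _ 3] allI impI)
    fix l n d :: nat
    assume H: "2 \<le> l \<and> i \<le> l - 1 \<and> 3 \<le> n \<and> 1 < d"
    define X where "X = 4 * sqrt (ln n / (c * n)) + 1 / n"
    have "(\<Sum>h\<in>PiE {1..i} (\<lambda>_. {1..d-1}).
          cmod ((\<Sum>k=1..i. of_real (\<beta> k) * e (real (h k) / real d)) + of_real \<eta>) ^ n)
        \<le> real d ^ i * X" (is "?S \<le> _")
      using sum_norm_weighted_e_power_le[OF assms(1) \<beta> assms(4) weights, of n d] H
      unfolding X_def c_def by (simp add: mult_ac)
    also have "\<dots> \<le> real d ^ (l - 1) * X"
      unfolding X_def using H \<open>0 < c\<close> by (intro mult_right_mono power_increasing) auto
    finally have "(1 / real d ^ (l - 1)) * ?S \<le> X"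
      using H by (simp add: pos_divide_le_eq mult.commute)
    also have "\<dots> \<le> (4 / sqrt c + 1) * ln n / sqrt n"
      unfolding X_def using sqrt_ln_div_add_inverse_le[OF \<open>0 < c\<close>] H by simp
    finally show "(1 / real d ^ (l - 1)) * ?S \<le> (4 / sqrt c + 1) * ln n / sqrt n" .
  qed
qed

end
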